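(* Consider the multi-agent delayed online learning protocol of the context. Assume that the maximum delay is bounded by $\tau$ (i.e. $\{1,\dots,t-\tau-1\}\subset\mathcal S_t$ for all $t$), that $\|g_t\|_*\le G$ for all $t$, and that for every agent $i$ and time $t$, $\mathcal S_t\subset\mathcal R^i_t$. Let DDA be run with \[\eta_t=\frac{r}{\sqrt{\widehat L_t+G^2(2\tau+1)^2}}.\] Then for every $p\in\mathcal X$ with $h(p)\le r^2$, \[R_T(p)\le 2r\max_{1\le t\le T}\sqrt{\widehat L_t+G^2(2\tau+1)^2}\le 2r\sqrt{L_T+G^2(2\tau+1)^2}.\]
   Context: Let $\mathcal V$ be a finite-dimensional real vector space with norm $\|\cdot\|$ and dual norm $\|\cdot\|_*$, and $\mathcal X\subset\mathcal V$ closed convex. A regularizer $h:\mathcal V\to\mathbb R\cup\{+\infty\}$ is lower semicontinuous, $1$-strongly convex w.r.t. $\|\cdot\|$ on $\mathcal X$, with $\mathcal X\subset\operatorname{dom}h$, whose subdifferential admits a continuous selection, and $h\ge0$. Protocol: several agents; at each round $t=1,\dots,T$ one agent $i(t)$ is active, plays $x_t\in\mathcal X$, incurs $f_t(x_t)$ ($f_t$ convex, $\mathcal X\subset\operatorname{dom}\partial f_t$); a subgradient $g_t\in\partial f_t(x_t)$ is later received by the agents (at possibly different times). $\mathcal S^i_t\subset\{1,\dots,t-1\}$: timestamps of subgradients available to agent $i$ at time $t$, nondecreasing in $t$; $\mathcal S_t=\mathcal S^{i(t)}_t$, $\mathcal U_t=\{1,\dots,t-1\}\setminus\mathcal S_t$.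 DDA: $x_t=\arg\min_{x\in\mathcal X}\{\sum_{s\in\mathcal S_t}\langle g_s,x\rangle+h(x)/\eta_t\}$. Regret: $R_T(p)=\sum_tf_t(x_t)-\sum_tf_t(p)$. Lag: $L_T=\sum_{s=1}^T\big(\|g_s\|_*^2+2\|g_s\|_*\sum_{q\in\mathcal U_s}\|g_q\|_*\big)$. Per-agent arrival order: for each agent $i$, $\sigma_i$ is a permutation of $\{1,\dots,T\}$ such that $g_{\sigma_i(k)}$ is the $k$-th subgradient received by $i$, consistent with availability ($\mathcal S^i_t=\{\sigma_i(1),\dots,\sigma_i(|\mathcal S^i_t|)\}$ for all $t$); $\mathcal R^i_t=\{\sigma_i(1),\dots,\sigma_i(\sigma_i^{-1}(t)-1)\}$ is the set of timestamps of feedback received by agent $i$ before $g_t$. Finally \[\widehat L_t=\sum_{s\in\mathcal S_t}\Big(\|g_s\|_*^2+2\|g_s\|_*\sum_{q\in\mathcal R^{i(t)}_s\setminus\mathcal S_s}\|g_q\|_*\Big).\] *)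

theory Defs
  imports "HOL-Analysis.Analysis"
begin

(* The finite-dimensional real vector space V is an arbitrary euclidean_space type 'a;
   its dual V* is identified with 'a via the inner product, so <g,x> = g \<bullet> x.
   The norm ||.|| is an arbitrary norm nrm on 'a (not necessarily the Euclidean one). *)

definition is_norm :: "('a::euclidean_space \<Rightarrow> real) \<Rightarrow> bool" where
  "is_norm nrm \<longleftrightarrow> (\<forall>x. nrm x = 0 \<longleftrightarrow> x = 0) \<and>
     (\<forall>x y. nrm (x + y) \<le> nrm x + nrm y) \<and>
     (\<forall>c x. nrm (c *\<^sub>R x) = \<bar>c\<bar> * nrm x)"

definition dual_norm :: "('a::euclidean_space \<Rightarrow> real) \<Rightarrow> 'a \<Rightarrow> real" where
  "dual_norm nrm g = Sup {g \<bullet> x | x. nrm x \<le> 1}"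

definition lower_semicont :: "('a::euclidean_space \<Rightarrow> ereal) \<Rightarrow> bool" where
  "lower_semicont h \<longleftrightarrow> (\<forall>x. h x \<le> Liminf (at x) h)"

definition convex_ext :: "('a::euclidean_space \<Rightarrow> ereal) \<Rightarrow> bool" where
  "convex_ext f \<longleftrightarrow> (\<forall>x y. \<forall>t\<in>{0<..<1::real}.
      f (t *\<^sub>R x + (1 - t) *\<^sub>R y) \<le> ereal t * f x + ereal (1 - t) * f y)"

definition subdiff :: "('a::euclidean_space \<Rightarrow> ereal) \<Rightarrow> 'a \<Rightarrow> 'a set" where
  "subdiff f x = {g. \<bar>f x\<bar> \<noteq> \<infinity> \<and> (\<forall>y. f x + ereal (g \<bullet> (y - x)) \<le> f y)}"

definition dom_subdiff :: "('a::euclidean_space \<Rightarrow> ereal) \<Rightarrow> 'a set" where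
  "dom_subdiff f = {x. subdiff f x \<noteq> {}}"

(* 1-strongly convex w.r.t. nrm on X (h is finite on X) *)
definition strongly_convex_on :: "('a::euclidean_space \<Rightarrow> real) \<Rightarrow> 'a set \<Rightarrow> ('a \<Rightarrow> ereal) \<Rightarrow> bool" where
  "strongly_convex_on nrm X h \<longleftrightarrow> (\<forall>x\<in>X. \<forall>y\<in>X. \<forall>t\<in>{0..1::real}.
      real_of_ereal (h (t *\<^sub>R x + (1 - t) *\<^sub>R y))
        \<le> t * real_of_ereal (h x) + (1 - t) * real_of_ereal (h y)
           - t * (1 - t) / 2 * (nrm (x - y))\<^sup>2)"

(* set of timestamps received by agent i before g_t, given arrival order sig i on {1..T} *)
definition recv_before :: "nat \<Rightarrow> ('i \<Rightarrow> nat \<Rightarrow> nat) \<Rightarrow> 'i \<Rightarrow> nat \<Rightarrow> nat set" where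
  "recv_before T sig i t = sig i ` {1..<the_inv_into {1..T} (sig i) t}"

end

(*
  The rounds are processed not in time order but in increasing order of lag (I t), the lag of
  their information sets (ties broken by time). This order extends "the feedback of q is
  available at t", so the step sizes r / sqrt (lag (I t) + G^2 (2 tau + 1)^2) are
  nonincreasing along it, and each iterate x t differs from the minimiser for the whole
  initial segment before t only through the gradients still missing at t. By strong
  convexity this costs at most eta t times their dual norm, so a be-the-leader argument along
  the order bounds the linear regret by h p / eta_min plus the sum of eta t times the
  increments of the lag along the order. The lag of the initial segment ending at t exceeds
  lag (I t) by at most G^2 (2 tau + 1)^2, because every additional concurrent pair (q, s) has
  |q - s| <= tau and max q s within tau of t; an AdaGrad-type summation then gives the first
  bound. The second bound is monotonicity of the lag.
*)
theory Submission
  imports Defs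
begin

section \<open>Sums and counts over ranked finite sets\<close>

lemma sum_split_at_rank:
  fixes rank :: "'b \<Rightarrow> 'c::linorder"
  assumes "finite Y" "inj_on rank Y" "q \<in> Y"
  shows "sum f Y = f q + sum f {s\<in>Y. rank s < rank q} + sum f {s\<in>Y. rank q < rank s}"
proof -
  let ?L = "{s\<in>Y. rank s < rank q}" and ?U = "{s\<in>Y. rank q < rank s}"
  have "rank s < rank q \<or> rank q < rank s" if "s \<in> Y" "s \<noteq> q" for s
    using inj_onD[OF assms(2) _ that(1) assms(3)] that(2) by (metis linorder_neqE)
  then have "Y = insert q (?L \<union> ?U)"
    using assms(3) by blast
  then have "sum f Y = sum f (insert q (?L \<union> ?U))"
    by (rule arg_cong)
  also have "\<dots> = f q + sum f (?L \<union> ?U)"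
    using assms(1) by (intro sum.insert) auto
  also have "sum f (?L \<union> ?U) = sum f ?L + sum f ?U"
    using assms(1) by (intro sum.union_disjoint) auto
  finally show ?thesis
    by (simp add: add.assoc)
qed

lemma sum_symmetric_square_eq:
  fixes f :: "'b \<Rightarrow> 'b \<Rightarrow> 'v::comm_semiring_1" and rank :: "'b \<Rightarrow> 'c::linorder"
  assumes "finite Y" "inj_on rank Y" "\<And>q s. f q s = f s q"
  shows "(\<Sum>q\<in>Y. \<Sum>s\<in>Y. f q s) = (\<Sum>q\<in>Y. f q q + 2 * (\<Sum>s\<in>{s\<in>Y. rank s < rank q}. f q s))"
proof -
  have "(\<Sum>q\<in>Y. \<Sum>s\<in>{s\<in>Y. rank q < rank s}. f q s) = (\<Sum>s\<in>Y. \<Sum>q\<in>{q\<in>Y. rank q < rank s}. f q s)"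
    using assms(1) by (rule sum.swap_restrict[OF _ assms(1)])
  also have "\<dots> = (\<Sum>q\<in>Y. \<Sum>s\<in>{s\<in>Y. rank s < rank q}. f q s)"
    by (simp add: assms(3))
  finally have upper_eq_lower: "(\<Sum>q\<in>Y. \<Sum>s\<in>{s\<in>Y. rank q < rank s}. f q s)
      = (\<Sum>q\<in>Y. \<Sum>s\<in>{s\<in>Y. rank s < rank q}. f q s)" .
  have "(\<Sum>s\<in>Y. f q s)
      = f q q + (\<Sum>s\<in>{s\<in>Y. rank s < rank q}. f q s) + (\<Sum>s\<in>{s\<in>Y. rank q < rank s}. f q s)"
    if "q \<in> Y" for q
    using sum_split_at_rank[OF assms(1,2) that] .
  then have "(\<Sum>q\<in>Y. \<Sum>s\<in>Y. f q s) = (\<Sum>q\<in>Y. f q q) + (\<Sum>q\<in>Y. \<Sum>s\<in>{s\<in>Y. rank s < rank q}. f q s)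
      + (\<Sum>q\<in>Y. \<Sum>s\<in>{s\<in>Y. rank q < rank s}. f q s)"
    by (simp add: sum.distrib)
  then show ?thesis
    unfolding upper_eq_lower by (simp add: sum.distrib mult_2 add.assoc)
qed

lemma sum_symmetric_pairs_eq:
  fixes a :: "'b \<Rightarrow> 'v::comm_semiring_1" and rank :: "'b \<Rightarrow> 'c::linorder"
  assumes "finite Y" "inj_on rank Y" "symp R" "\<And>q. q \<in> Y \<Longrightarrow> R q q"
  shows "(\<Sum>q\<in>Y. \<Sum>s\<in>{s\<in>Y. R q s}. a q * a s)
    = (\<Sum>s\<in>Y. a s * a s + 2 * a s * (\<Sum>q\<in>{q\<in>Y. rank q < rank s \<and> R q s}. a q))"
proof -
  define f where "f q s = (if R q s then a q * a s else 0)" for q s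
  have "(\<Sum>q\<in>Y. \<Sum>s\<in>{s\<in>Y. R q s}. a q * a s) = (\<Sum>q\<in>Y. \<Sum>s\<in>Y. f q s)"
    using assms(1) unfolding f_def by (simp add: sum.inter_filter[symmetric])
  also have "\<dots> = (\<Sum>q\<in>Y. f q q + 2 * (\<Sum>s\<in>{s\<in>Y. rank s < rank q}. f q s))"
    using assms(1,2) by (rule sum_symmetric_square_eq)
      (use assms(3) in \<open>auto simp: f_def symp_def mult.commute\<close>)
  also have "\<dots> = (\<Sum>s\<in>Y. a s * a s + 2 * a s * (\<Sum>q\<in>{q\<in>Y. rank q < rank s \<and> R q s}. a q))"
  proof (rule sum.cong[OF refl])
    fix s
    assume "s \<in> Y"
    have "(\<Sum>q\<in>{q\<in>Y. rank q < rank s}. f s q)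
        = (\<Sum>q\<in>{q\<in>Y. rank q < rank s}. if R q s then a s * a q else 0)"
      using assms(3) unfolding f_def by (intro sum.cong) (auto dest: sympD)
    also have "\<dots> = (\<Sum>q\<in>{q\<in>Y. rank q < rank s \<and> R q s}. a s * a q)"
      using assms(1) by (simp add: sum.inter_filter[symmetric] conj_commute conj_left_commute)
    moreover have "f s s = a s * a s"
      using assms(4)[OF \<open>s \<in> Y\<close>] unfolding f_def by simp
    ultimately show "f s s + 2 * (\<Sum>q\<in>{q\<in>Y. rank q < rank s}. f s q)
        = a s * a s + 2 * a s * (\<Sum>q\<in>{q\<in>Y. rank q < rank s \<and> R q s}. a q)"
      by (simp add: sum_distrib_left mult.assoc)
  qed
  finally show ?thesis .
qed

lemma before_insert_max_rank:
  fixes rank :: "'b \<Rightarrow> 'c::linorder"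
  assumes "inj_on rank (insert m S)" "m \<notin> S" "\<And>q. q \<in> S \<Longrightarrow> rank q \<le> rank m"
  shows "{q\<in>insert m S. rank q < rank m} = S"
    and "t \<in> S \<Longrightarrow> {q\<in>insert m S. rank q < rank t} = {q\<in>S. rank q < rank t}"
proof -
  have less: "rank q < rank m" if "q \<in> S" for q
    using assms(3)[OF that] inj_onD[OF assms(1), of q m] that assms(2) by fastforce
  then show "{q\<in>insert m S. rank q < rank m} = S"
    by auto
  show "{q\<in>insert m S. rank q < rank t} = {q\<in>S. rank q < rank t}" if "t \<in> S"
    using less[OF that] by auto
qed

lemma two_sqrt_add_divide_le:
  fixes D d B :: real
  assumes "0 \<le> D" "0 \<le> d" "D + d \<le> B\<^sup>2" "0 \<le> B"
  shows "2 * sqrt D + d / B \<le> 2 * sqrt (D + d)"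
proof (cases "d = 0")
  case False
  define y where "y = sqrt (D + d)"
  have "0 < y" "y \<le> B" "y\<^sup>2 = D + d"
    using assms False real_sqrt_le_mono[OF assms(3)] unfolding y_def by auto
  have "d / B \<le> d / y"
    using \<open>0 < y\<close> \<open>y \<le> B\<close> assms(2) by (intro divide_left_mono) auto
  also have "d / y \<le> 2 * (y - sqrt D)"
  proof -
    have "sqrt D \<le> y"
      unfolding y_def using assms(2) by simp
    have "d = (y - sqrt D) * (y + sqrt D)"
      using \<open>y\<^sup>2 = D + d\<close> assms(1) by (simp add: algebra_simps power2_eq_square)
    also have "\<dots> \<le> (y - sqrt D) * (2 * y)"
      using \<open>sqrt D \<le> y\<close> by (intro mult_left_mono) auto
    finally show ?thesis
      using \<open>0 < y\<close> by (simp add: pos_divide_le_eq mult_ac)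
  qed
  finally show ?thesis
    unfolding y_def by simp
qed simp

lemma sum_divide_prefix_bound_le:
  fixes d B :: "'b \<Rightarrow> real" and rank :: "'b \<Rightarrow> 'c::linorder"
  assumes "finite K" "\<And>t. t \<in> K \<Longrightarrow> 0 \<le> d t" "\<And>t. t \<in> K \<Longrightarrow> 0 \<le> B t"
    and "\<And>t. t \<in> K \<Longrightarrow> (\<Sum>q\<in>{q\<in>K. rank q \<le> rank t}. d q) \<le> (B t)\<^sup>2"
  shows "(\<Sum>t\<in>K. d t / B t) \<le> 2 * sqrt (\<Sum>t\<in>K. d t)"
  using assms(1-4)
proof (induction K rule: finite_ranking_induct[where f = rank])
  case (insert m S)
  show ?case
  proof (cases "m \<in> S")
    case False
    have "(\<Sum>t\<in>S. d t / B t) \<le> 2 * sqrt (\<Sum>t\<in>S. d t)"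
    proof (rule insert.IH)
      fix t
      assume "t \<in> S"
      have "(\<Sum>q\<in>{q\<in>S. rank q \<le> rank t}. d q) \<le> (\<Sum>q\<in>{q\<in>insert m S. rank q \<le> rank t}. d q)"
        using insert.hyps(1) insert.prems(1) by (intro sum_mono2) auto
      also have "\<dots> \<le> (B t)\<^sup>2"
        using \<open>t \<in> S\<close> insert.prems(3) by simp
      finally show "(\<Sum>q\<in>{q\<in>S. rank q \<le> rank t}. d q) \<le> (B t)\<^sup>2" .
    qed (use insert.prems in auto)
    moreover have "(\<Sum>t\<in>S. d t) + d m \<le> (B m)\<^sup>2"
    proof -
      have "{q\<in>insert m S. rank q \<le> rank m} = insert m S"
        using insert.hyps(2) by auto
      then show ?thesis
        using insert.prems(3)[of m] insert.hyps(1) False by (simp add: add.commute)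
    qed
    then have "2 * sqrt (\<Sum>t\<in>S. d t) + d m / B m \<le> 2 * sqrt ((\<Sum>t\<in>S. d t) + d m)"
      using insert.prems(1,2) by (intro two_sqrt_add_divide_le) (auto intro: sum_nonneg)
    ultimately show ?thesis
      using insert.hyps(1) False by (simp add: add.commute)
  qed (use insert in \<open>simp add: insert_absorb\<close>)
qed simp

(* Shifting every coordinate below t - \<tau> up by 2\<tau> + 1 maps Q injectively into {t - \<tau>..t + \<tau>}\<^sup>2. *)
lemma card_pairs_within_delay_le:
  fixes t \<tau> :: nat and Q :: "(nat \<times> nat) set"
  assumes "\<And>q s. (q, s) \<in> Q \<Longrightarrow>
    q \<le> t + \<tau> \<and> s \<le> t + \<tau> \<and> q \<le> s + \<tau> \<and> s \<le> q + \<tau> \<and> (t \<le> q + \<tau> \<or> t \<le> s + \<tau>)"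
  shows "card Q \<le> (2 * \<tau> + 1)\<^sup>2"
proof -
  define shift where "shift y = (if y + \<tau> < t then y + 2 * \<tau> + 1 else y)" for y
  define J where "J = {t - \<tau>..t + \<tau>}"
  have "inj_on (map_prod shift shift) Q"
  proof (rule inj_onI)
    fix u v
    assume "u \<in> Q" "v \<in> Q" "map_prod shift shift u = map_prod shift shift v"
    with assms[of "fst u" "snd u"] assms[of "fst v" "snd v"] show "u = v"
      unfolding shift_def by (cases u; cases v) (auto split: if_splits)
  qed
  moreover have "map_prod shift shift ` Q \<subseteq> J \<times> J"
    using assms unfolding shift_def J_def by fastforce
  ultimately have "card Q \<le> card (J \<times> J)"
    by (intro card_inj_on_le) (auto simp: J_def)
  also have "\<dots> \<le> (2 * \<tau> + 1)\<^sup>2"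
  proof -
    have "card J \<le> 2 * \<tau> + 1"
      unfolding J_def by simp
    then show ?thesis
      unfolding card_cartesian_product power2_eq_square by (intro mult_mono) auto
  qed
  finally show ?thesis .
qed

section \<open>Norms and dual norms\<close>

locale finite_dim_norm =
  fixes nrm :: "'a::euclidean_space \<Rightarrow> real"
  assumes is_norm: "is_norm nrm"
begin

lemma nrm_eq_0_iff: "nrm x = 0 \<longleftrightarrow> x = 0"
  and nrm_triangle: "nrm (x + y) \<le> nrm x + nrm y"
  and nrm_scaleR: "nrm (c *\<^sub>R x) = \<bar>c\<bar> * nrm x"
  using is_norm unfolding is_norm_def by blast+

lemma nrm_0 [simp]: "nrm 0 = 0"
  by (simp add: nrm_eq_0_iff)

lemma nrm_minus_commute: "nrm (x - y) = nrm (y - x)"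
  using nrm_scaleR[of "-1" "x - y"] by simp

lemma nrm_nonneg: "0 \<le> nrm x"
  using nrm_triangle[of x "- x"] nrm_scaleR[of "-1" x] by simp

lemma nrm_pos: "x \<noteq> 0 \<Longrightarrow> 0 < nrm x"
  using nrm_nonneg[of x] nrm_eq_0_iff[of x] by linarith

lemma convex_on_nrm: "convex_on UNIV nrm"
proof (rule convex_onI)
  fix t :: real and x y :: 'a
  assume "0 < t" "t < 1"
  then show "nrm ((1 - t) *\<^sub>R x + t *\<^sub>R y) \<le> (1 - t) * nrm x + t * nrm y"
    using nrm_triangle[of "(1 - t) *\<^sub>R x" "t *\<^sub>R y"] by (simp add: nrm_scaleR)
qed simp

lemma norm_le_nrm: obtains c where "0 < c" "\<And>x. c * norm x \<le> nrm x"
proof -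
  have "continuous_on (sphere 0 1) nrm"
    using convex_on_continuous[OF open_UNIV convex_on_nrm] continuous_on_subset by blast
  moreover have "sphere (0::'a) 1 \<noteq> {}"
    using sphere_eq_empty[of "0::'a" 1] by simp
  ultimately obtain x0 where x0: "x0 \<in> sphere (0::'a) 1" "\<And>y. y \<in> sphere 0 1 \<Longrightarrow> nrm x0 \<le> nrm y"
    using continuous_attains_inf[OF compact_sphere] by metis
  have "nrm x0 * norm x \<le> nrm x" for x
  proof (cases "x = 0")
    case False
    then have "nrm x0 \<le> nrm ((1 / norm x) *\<^sub>R x)"
      by (intro x0(2)) simp
    with False show ?thesis
      by (simp add: nrm_scaleR field_simps)
  qed simp
  moreover have "0 < nrm x0"
    using x0(1) by (intro nrm_pos) auto
  ultimately show ?thesis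
    using that by blast
qed

lemma nrm_CauchyI:
  assumes "\<And>e. 0 < e \<Longrightarrow> \<exists>N. \<forall>m\<ge>N. \<forall>n\<ge>N. nrm (xs m - xs n) < e"
  shows "Cauchy xs"
proof -
  obtain c where c: "0 < c" "\<And>x. c * norm x \<le> nrm x"
    using norm_le_nrm by blast
  show ?thesis
  proof (rule CauchyI)
    fix e :: real
    assume "0 < e"
    then obtain N where N: "\<forall>m\<ge>N. \<forall>n\<ge>N. nrm (xs m - xs n) < c * e"
      using assms[of "c * e"] c(1) by auto
    have "norm (xs m - xs n) < e" if "m \<ge> N" "n \<ge> N" for m n
    proof -
      have "c * norm (xs m - xs n) < c * e"
        using N that c(2)[of "xs m - xs n"] by fastforce
      then show ?thesis
        using c(1) by simp
    qed
    then show "\<exists>M. \<forall>m\<ge>M. \<forall>n\<ge>M. norm (xs m - xs n) < e"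
      by blast
  qed
qed

lemma bdd_above_dual_norm_set: "bdd_above {g \<bullet> x | x. nrm x \<le> 1}"
proof -
  obtain c where c: "0 < c" "\<And>x. c * norm x \<le> nrm x"
    using norm_le_nrm by blast
  have "g \<bullet> x \<le> norm g / c" if "nrm x \<le> 1" for x
  proof -
    have "norm x \<le> 1 / c"
      using c that order_trans[OF c(2) that] by (simp add: field_simps)
    then have "norm g * norm x \<le> norm g / c"
      using mult_left_mono[of "norm x" "1 / c" "norm g"] by simp
    then show ?thesis
      using norm_cauchy_schwarz[of g x] by linarith
  qed
  then show ?thesis
    by (intro bdd_aboveI) blast
qed

lemma inner_le_dual_norm: "nrm x \<le> 1 \<Longrightarrow> g \<bullet> x \<le> dual_norm nrm g"
  unfolding dual_norm_def by (rule cSup_upper[OF _ bdd_above_dual_norm_set]) blast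

lemma dual_norm_nonneg: "0 \<le> dual_norm nrm g"
  using inner_le_dual_norm[of 0 g] by simp

lemma inner_le_dual_norm_mult: "g \<bullet> x \<le> dual_norm nrm g * nrm x"
proof (cases "x = 0")
  case False
  then have "g \<bullet> ((1 / nrm x) *\<^sub>R x) \<le> dual_norm nrm g"
    by (intro inner_le_dual_norm) (simp add: nrm_scaleR nrm_pos less_imp_le)
  with False show ?thesis
    by (simp add: nrm_pos field_simps)
qed (simp add: dual_norm_nonneg)

lemma dual_norm_0 [simp]: "dual_norm nrm 0 = 0"
proof -
  have "{(0::'a) \<bullet> x | x. nrm x \<le> 1} = {0}"
    by (auto intro!: exI[of _ 0])
  then show ?thesis
    unfolding dual_norm_def by simp
qed

lemma dual_norm_triangle: "dual_norm nrm (g + g') \<le> dual_norm nrm g + dual_norm nrm g'"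
  unfolding dual_norm_def[of nrm "g + g'"]
proof (rule cSup_least)
  show "{(g + g') \<bullet> x | x. nrm x \<le> 1} \<noteq> {}"
    by (auto intro!: exI[of _ 0])
qed (auto simp: inner_add_left intro!: add_mono inner_le_dual_norm)

lemma dual_norm_sum_le: "dual_norm nrm (sum g A) \<le> (\<Sum>i\<in>A. dual_norm nrm (g i))"
proof (induction A rule: infinite_finite_induct)
  case (insert i A)
  then show ?case
    using dual_norm_triangle[of "g i" "sum g A"] by simp
qed simp_all

end

section \<open>Dual averaging with a strongly convex regulariser\<close>

lemma lower_semicont_LIMSEQ_le:
  fixes h :: "'a::euclidean_space \<Rightarrow> ereal"
  assumes "lower_semicont h" "xs \<longlonglongrightarrow> x" "(\<lambda>n. h (xs n)) \<longlonglongrightarrow> l"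
  shows "h x \<le> l"
proof -
  have "h x = min (h x) (Liminf (at x) h)"
    using assms(1) unfolding lower_semicont_def by (simp add: min_def)
  also have "\<dots> = (SUP e\<in>{0<..}. INF y\<in>ball x e. h y)"
    by (rule min_Liminf_at)
  also have "\<dots> \<le> l"
  proof (rule SUP_least)
    fix e :: real
    assume "e \<in> {0<..}"
    then have "eventually (\<lambda>n. xs n \<in> ball x e) sequentially"
      using assms(2) by (auto simp: tendsto_iff dist_commute)
    then have "eventually (\<lambda>n. (INF y\<in>ball x e. h y) \<le> h (xs n)) sequentially"
      by (auto elim!: eventually_mono intro: INF_lower)
    then show "(INF y\<in>ball x e. h y) \<le> l"
      using tendsto_lowerbound[OF assms(3)] by simp
  qed
  finally show ?thesis .
qed

locale strongly_convex_regularizer = finite_dim_norm nrm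
  for nrm :: "'a::euclidean_space \<Rightarrow> real" +
  fixes X :: "'a set" and h :: "'a \<Rightarrow> ereal"
  assumes closed_X: "closed X" and convex_X: "convex X" and nonempty_X: "X \<noteq> {}"
    and lsc_h: "lower_semicont h"
    and strongly_convex_h: "strongly_convex_on nrm X h"
    and finite_h: "\<And>y. y \<in> X \<Longrightarrow> h y < \<infinity>"
    and nonneg_h: "\<And>y. 0 \<le> h y"
begin

abbreviation hr :: "'a \<Rightarrow> real" where
  "hr y \<equiv> real_of_ereal (h y)"

definition dda_objective :: "'a \<Rightarrow> real \<Rightarrow> 'a \<Rightarrow> real" where
  "dda_objective W \<eta> y = W \<bullet> y + hr y / \<eta>"

definition dda_minimizer :: "'a \<Rightarrow> real \<Rightarrow> 'a \<Rightarrow> bool" where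
  "dda_minimizer W \<eta> v \<longleftrightarrow> v \<in> X \<and> (\<forall>y\<in>X. dda_objective W \<eta> v \<le> dda_objective W \<eta> y)"

definition dda_value :: "'a \<Rightarrow> real \<Rightarrow> real" where
  "dda_value W \<eta> = (INF y\<in>X. dda_objective W \<eta> y)"

lemma hr_nonneg: "0 \<le> hr y"
  using nonneg_h[of y] by (simp add: real_of_ereal_pos)

lemma ereal_hr [simp]: "y \<in> X \<Longrightarrow> ereal (hr y) = h y"
  using nonneg_h[of y] finite_h[of y] by (cases "h y") auto

lemma hr_strongly_convex:
  assumes "x \<in> X" "y \<in> X" "0 \<le> s" "s \<le> 1"
  shows "hr (s *\<^sub>R x + (1 - s) *\<^sub>R y) \<le> s * hr x + (1 - s) * hr y - s * (1 - s) / 2 * (nrm (x - y))\<^sup>2"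
  using strongly_convex_h assms unfolding strongly_convex_on_def by auto

lemma dda_objective_strongly_convex:
  assumes "x \<in> X" "y \<in> X" "0 \<le> s" "s \<le> 1" "0 < \<eta>"
  shows "dda_objective W \<eta> (s *\<^sub>R x + (1 - s) *\<^sub>R y)
    \<le> s * dda_objective W \<eta> x + (1 - s) * dda_objective W \<eta> y - s * (1 - s) / (2 * \<eta>) * (nrm (x - y))\<^sup>2"
proof -
  have "hr (s *\<^sub>R x + (1 - s) *\<^sub>R y) / \<eta>
      \<le> (s * hr x + (1 - s) * hr y - s * (1 - s) / 2 * (nrm (x - y))\<^sup>2) / \<eta>"
    using hr_strongly_convex[OF assms(1-4)] assms(5) by (simp add: divide_right_mono)
  also have "\<dots> = s * (hr x / \<eta>) + (1 - s) * (hr y / \<eta>) - s * (1 - s) / (2 * \<eta>) * (nrm (x - y))\<^sup>2"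
    using assms(5) by (simp add: field_simps)
  moreover have "W \<bullet> (s *\<^sub>R x + (1 - s) *\<^sub>R y) = s * (W \<bullet> x) + (1 - s) * (W \<bullet> y)"
    by (simp add: inner_add_right)
  ultimately show ?thesis
    unfolding dda_objective_def distrib_left by linarith
qed

lemma dda_objective_midpoint:
  assumes "y \<in> X" "z \<in> X" "0 < \<eta>"
  shows "(nrm (y - z))\<^sup>2 / (8 * \<eta>)
    \<le> (dda_objective W \<eta> y + dda_objective W \<eta> z) / 2 - dda_objective W \<eta> ((1/2) *\<^sub>R y + (1 - 1/2) *\<^sub>R z)"
  using dda_objective_strongly_convex[OF assms(1,2) _ _ assms(3), of "1/2" W] by (simp add: add_divide_distrib)

lemma dda_objective_lower_bound:
  assumes "x0 \<in> X" "y \<in> X" "0 < \<eta>"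
  shows "W \<bullet> x0 - hr x0 / \<eta> - \<eta> * (dual_norm nrm W)\<^sup>2 \<le> dda_objective W \<eta> y"
proof -
  define d where "d = nrm (y - x0)"
  have "hr ((1/2) *\<^sub>R y + (1 - 1/2) *\<^sub>R x0) \<le> 1/2 * hr y + (1 - 1/2) * hr x0 - 1/2 * (1 - 1/2) / 2 * d\<^sup>2"
    unfolding d_def by (rule hr_strongly_convex[OF assms(2,1)]) auto
  then have "d\<^sup>2 / 4 - hr x0 \<le> hr y"
    using hr_nonneg[of "(1/2) *\<^sub>R y + (1 - 1/2) *\<^sub>R x0"] by simp
  then have "(d\<^sup>2 / 4 - hr x0) / \<eta> \<le> hr y / \<eta>"
    using assms(3) by (simp add: divide_right_mono)
  moreover have "W \<bullet> x0 - dual_norm nrm W * d \<le> W \<bullet> y"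
    using inner_le_dual_norm_mult[of W "x0 - y"] nrm_minus_commute[of y x0]
    unfolding d_def by (simp add: inner_diff_right)
  moreover have "0 \<le> (d - 2 * \<eta> * dual_norm nrm W)\<^sup>2 / (4 * \<eta>)"
    using assms(3) by simp
  moreover have "(d - 2 * \<eta> * dual_norm nrm W)\<^sup>2 / (4 * \<eta>)
      = d\<^sup>2 / (4 * \<eta>) - d * dual_norm nrm W + \<eta> * (dual_norm nrm W)\<^sup>2"
    using assms(3) by (simp add: field_simps power2_eq_square)
  moreover have "(d\<^sup>2 / 4 - hr x0) / \<eta> = d\<^sup>2 / (4 * \<eta>) - hr x0 / \<eta>"
    using assms(3) by (simp add: field_simps)
  ultimately show ?thesis
    unfolding dda_objective_def by (simp add: mult.commute)
qed

lemma dda_minimizing_Cauchy: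
  assumes "0 < \<eta>" "\<And>n. xs n \<in> X" "\<And>y. y \<in> X \<Longrightarrow> m \<le> dda_objective W \<eta> y"
    and "(\<lambda>n. dda_objective W \<eta> (xs n)) \<longlonglongrightarrow> m"
  shows "Cauchy xs"
proof (rule nrm_CauchyI)
  fix e :: real
  assume "0 < e"
  then have "0 < e\<^sup>2 / (8 * \<eta>)"
    using assms(1) by simp
  then obtain N where N: "\<And>n. n \<ge> N \<Longrightarrow> \<bar>dda_objective W \<eta> (xs n) - m\<bar> < e\<^sup>2 / (8 * \<eta>)"
    using assms(4) unfolding LIMSEQ_iff real_norm_def by blast
  have "nrm (xs k - xs n) < e" if "k \<ge> N" "n \<ge> N" for k n
  proof -
    let ?mid = "(1/2) *\<^sub>R xs k + (1 - 1/2) *\<^sub>R xs n"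
    have "?mid \<in> X"
      using convex_X assms(2) unfolding convex_def by simp
    then have "m \<le> dda_objective W \<eta> ?mid"
      by (rule assms(3))
    moreover have "dda_objective W \<eta> (xs k) - m < e\<^sup>2 / (8 * \<eta>)" "dda_objective W \<eta> (xs n) - m < e\<^sup>2 / (8 * \<eta>)"
      using N that by (auto simp: abs_less_iff)
    ultimately have "(dda_objective W \<eta> (xs k) + dda_objective W \<eta> (xs n)) / 2 - dda_objective W \<eta> ?mid
        < e\<^sup>2 / (8 * \<eta>)"
      unfolding add_divide_distrib by linarith
    then have "(nrm (xs k - xs n))\<^sup>2 / (8 * \<eta>) < e\<^sup>2 / (8 * \<eta>)"
      using dda_objective_midpoint[OF assms(2) assms(2) assms(1), of k n W] by linarith
    then have "(nrm (xs k - xs n))\<^sup>2 < e\<^sup>2"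
      using assms(1) by (simp add: divide_less_cancel)
    then show ?thesis
      using \<open>0 < e\<close> nrm_nonneg by (simp add: power_less_imp_less_base)
  qed
  then show "\<exists>N. \<forall>k\<ge>N. \<forall>n\<ge>N. nrm (xs k - xs n) < e"
    by blast
qed

lemma dda_objective_LIMSEQ_le:
  assumes "0 < \<eta>" "\<And>n. xs n \<in> X" "xs \<longlonglongrightarrow> x" "x \<in> X"
    and "(\<lambda>n. dda_objective W \<eta> (xs n)) \<longlonglongrightarrow> m"
  shows "dda_objective W \<eta> x \<le> m"
proof -
  have "(\<lambda>n. \<eta> * (dda_objective W \<eta> (xs n) - W \<bullet> xs n)) \<longlonglongrightarrow> \<eta> * (m - W \<bullet> x)"
    by (intro tendsto_intros assms(3,5))
  moreover have "\<eta> * (dda_objective W \<eta> (xs n) - W \<bullet> xs n) = hr (xs n)" for n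
    using assms(1) unfolding dda_objective_def by simp
  ultimately have "(\<lambda>n. ereal (hr (xs n))) \<longlonglongrightarrow> ereal (\<eta> * (m - W \<bullet> x))"
    by simp
  then have "(\<lambda>n. h (xs n)) \<longlonglongrightarrow> ereal (\<eta> * (m - W \<bullet> x))"
    using assms(2) by simp
  then have "h x \<le> ereal (\<eta> * (m - W \<bullet> x))"
    by (rule lower_semicont_LIMSEQ_le[OF lsc_h assms(3)])
  then have "ereal (hr x) \<le> ereal (\<eta> * (m - W \<bullet> x))"
    using assms(4) by simp
  then have "hr x / \<eta> \<le> m - W \<bullet> x"
    using assms(1) by (simp add: pos_divide_le_eq mult.commute)
  then show ?thesis
    unfolding dda_objective_def by simp
qed

lemma dda_minimizer_exists:
  assumes "0 < \<eta>"
  obtains v where "dda_minimizer W \<eta> v"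
proof -
  let ?f = "dda_objective W \<eta>"
  obtain x0 where x0: "x0 \<in> X"
    using nonempty_X by blast
  define m where "m = (INF y\<in>X. ?f y)"
  have bdd: "bdd_below (?f ` X)"
    using dda_objective_lower_bound[OF x0 _ assms] by (intro bdd_belowI2)
  have m_le: "m \<le> ?f y" if "y \<in> X" for y
    unfolding m_def using bdd that by (rule cINF_lower)
  have "m \<in> closure (?f ` X)"
    unfolding m_def using nonempty_X bdd by (intro closure_contains_Inf) auto
  then obtain u where u: "\<And>n. u n \<in> ?f ` X" "u \<longlonglongrightarrow> m"
    unfolding closure_sequential by blast
  then have "\<forall>n. \<exists>y. y \<in> X \<and> ?f y = u n"
    by (metis imageE)
  then obtain xs where xs: "\<And>n. xs n \<in> X" "\<And>n. ?f (xs n) = u n"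
    by metis
  then have f_lim: "(\<lambda>n. ?f (xs n)) \<longlonglongrightarrow> m"
    using u(2) by simp
  obtain x where lim: "xs \<longlonglongrightarrow> x"
    using dda_minimizing_Cauchy[OF assms xs(1) m_le f_lim] Cauchy_convergent_iff convergent_def by blast
  have "x \<in> X"
    using closed_sequentially[OF closed_X] xs(1) lim by blast
  then have "?f x \<le> m"
    using dda_objective_LIMSEQ_le[OF assms xs(1) lim _ f_lim] by blast
  then have "dda_minimizer W \<eta> x"
    unfolding dda_minimizer_def using \<open>x \<in> X\<close> m_le order_trans by blast
  then show ?thesis
    by (rule that)
qed

lemma dda_minimizer_quadratic_growth:
  assumes "0 < \<eta>" "dda_minimizer W \<eta> v" "p \<in> X"
  shows "dda_objective W \<eta> v + (nrm (p - v))\<^sup>2 / (2 * \<eta>) \<le> dda_objective W \<eta> p"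
proof -
  have v: "v \<in> X"
    using assms(2) unfolding dda_minimizer_def by blast
  define q where "q = (nrm (p - v))\<^sup>2 / (2 * \<eta>)"
  define D where "D = dda_objective W \<eta> p - dda_objective W \<eta> v"
  have "z * q \<le> D" if "0 < z" "z < 1" for z
  proof -
    define s where "s = 1 - z"
    have "0 < s" "s < 1"
      using that unfolding s_def by auto
    have "s *\<^sub>R p + (1 - s) *\<^sub>R v \<in> X"
      using convex_X assms(3) v \<open>0 < s\<close> \<open>s < 1\<close> unfolding convex_def by auto
    then have "dda_objective W \<eta> v \<le> dda_objective W \<eta> (s *\<^sub>R p + (1 - s) *\<^sub>R v)"
      using assms(2) unfolding dda_minimizer_def by blast
    also have "\<dots> \<le> s * dda_objective W \<eta> p + (1 - s) * dda_objective W \<eta> v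
        - s * (1 - s) / (2 * \<eta>) * (nrm (p - v))\<^sup>2"
      using dda_objective_strongly_convex[OF assms(3) v _ _ assms(1)] \<open>0 < s\<close> \<open>s < 1\<close> by simp
    finally have "s * ((1 - s) * q) \<le> s * D"
      unfolding q_def D_def by (simp add: field_simps)
    then show ?thesis
      using \<open>0 < s\<close> unfolding s_def by simp
  qed
  then have "q \<le> D"
    by (rule field_le_mult_one_interval)
  then show ?thesis
    unfolding q_def D_def by simp
qed

lemma dda_minimizer_lipschitz:
  assumes "0 < \<eta>" "dda_minimizer U \<eta> u" "dda_minimizer W \<eta> w"
  shows "nrm (u - w) \<le> \<eta> * dual_norm nrm (W - U)"
proof -
  have "u \<in> X" "w \<in> X"
    using assms(2,3) unfolding dda_minimizer_def by blast+
  define d where "d = nrm (u - w)"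
  have "dda_objective W \<eta> w + d\<^sup>2 / (2 * \<eta>) \<le> dda_objective W \<eta> u"
    using dda_minimizer_quadratic_growth[OF assms(1,3) \<open>u \<in> X\<close>] unfolding d_def .
  moreover have "dda_objective U \<eta> u + d\<^sup>2 / (2 * \<eta>) \<le> dda_objective U \<eta> w"
    using dda_minimizer_quadratic_growth[OF assms(1,2) \<open>w \<in> X\<close>]
    unfolding d_def by (simp add: nrm_minus_commute)
  ultimately have "d\<^sup>2 / \<eta> \<le> (W - U) \<bullet> (u - w)"
    unfolding dda_objective_def by (simp add: inner_diff_left inner_diff_right field_simps)
  also have "\<dots> \<le> dual_norm nrm (W - U) * d"
    unfolding d_def by (rule inner_le_dual_norm_mult)
  finally have "d * d \<le> (\<eta> * dual_norm nrm (W - U)) * d"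
    using assms(1) by (simp add: field_simps power2_eq_square)
  moreover have "0 \<le> d"
    unfolding d_def by (rule nrm_nonneg)
  ultimately show ?thesis
    using assms(1) dual_norm_nonneg[of "W - U"] unfolding d_def[symmetric]
    by (cases "d = 0") (simp_all add: mult_le_cancel_right)
qed

lemma dda_value_eq: "dda_minimizer W \<eta> v \<Longrightarrow> dda_value W \<eta> = dda_objective W \<eta> v"
  unfolding dda_value_def dda_minimizer_def by (intro cInf_eq_minimum) auto

lemma dda_value_le: "0 < \<eta> \<Longrightarrow> p \<in> X \<Longrightarrow> dda_value W \<eta> \<le> dda_objective W \<eta> p"
  by (metis dda_minimizer_def dda_minimizer_exists dda_value_eq)

lemma dda_value_antimono:
  assumes "0 < \<eta>" "\<eta> \<le> \<eta>'"
  shows "dda_value W \<eta>' \<le> dda_value W \<eta>"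
proof -
  obtain v where v: "dda_minimizer W \<eta> v"
    using dda_minimizer_exists[OF assms(1)] .
  then have "dda_value W \<eta>' \<le> dda_objective W \<eta>' v"
    using assms by (intro dda_value_le) (auto simp: dda_minimizer_def)
  also have "\<dots> \<le> dda_objective W \<eta> v"
    unfolding dda_objective_def using assms hr_nonneg[of v] by (simp add: divide_left_mono)
  finally show ?thesis
    using dda_value_eq[OF v] by simp
qed

lemma dda_value_zero_nonneg:
  assumes "0 < \<eta>"
  shows "0 \<le> dda_value 0 \<eta>"
proof -
  obtain v where "dda_minimizer 0 \<eta> v"
    using dda_minimizer_exists[OF assms] .
  then show ?thesis
    using assms hr_nonneg[of v] by (simp add: dda_value_eq dda_objective_def)
qed

lemma dda_value_step:
  assumes "0 < \<eta>" "dda_minimizer W \<eta> v"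
  shows "g \<bullet> v \<le> dda_value (W + g) \<eta> - dda_value W \<eta> + \<eta> * (dual_norm nrm g)\<^sup>2 / 2"
proof -
  obtain v' where v': "dda_minimizer (W + g) \<eta> v'"
    using dda_minimizer_exists[OF assms(1)] .
  then have "v' \<in> X"
    unfolding dda_minimizer_def by blast
  define d where "d = nrm (v' - v)"
  have "dda_objective W \<eta> v + d\<^sup>2 / (2 * \<eta>) \<le> dda_objective W \<eta> v'"
    using dda_minimizer_quadratic_growth[OF assms \<open>v' \<in> X\<close>] unfolding d_def .
  moreover have "g \<bullet> v - dual_norm nrm g * d \<le> g \<bullet> v'"
    using inner_le_dual_norm_mult[of g "v - v'"] unfolding d_def
    by (simp add: nrm_minus_commute inner_diff_right)
  moreover have "0 \<le> (d - \<eta> * dual_norm nrm g)\<^sup>2 / (2 * \<eta>)"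
    using assms(1) by simp
  moreover have "(d - \<eta> * dual_norm nrm g)\<^sup>2 / (2 * \<eta>)
      = d\<^sup>2 / (2 * \<eta>) - dual_norm nrm g * d + \<eta> * (dual_norm nrm g)\<^sup>2 / 2"
    using assms(1) by (simp add: field_simps power2_eq_square)
  moreover have "dda_objective (W + g) \<eta> v' = dda_objective W \<eta> v' + g \<bullet> v'"
    unfolding dda_objective_def by (simp add: inner_add_left)
  ultimately have "dda_objective W \<eta> v + g \<bullet> v - \<eta> * (dual_norm nrm g)\<^sup>2 / 2 \<le> dda_objective (W + g) \<eta> v'"
    by linarith
  then show ?thesis
    using dda_value_eq[OF assms(2)] dda_value_eq[OF v'] by simp
qed

lemma dda_value_delayed_step:
  assumes "0 < \<eta>" "finite S" "J \<subseteq> S" "dda_minimizer (\<Sum>s\<in>J. g s) \<eta> u"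
  shows "g' \<bullet> u \<le> dda_value ((\<Sum>s\<in>S. g s) + g') \<eta> - dda_value (\<Sum>s\<in>S. g s) \<eta>
    + \<eta> * ((dual_norm nrm g')\<^sup>2 / 2 + dual_norm nrm g' * (\<Sum>q\<in>S - J. dual_norm nrm (g q)))"
proof -
  obtain v where v: "dda_minimizer (\<Sum>s\<in>S. g s) \<eta> v"
    using dda_minimizer_exists[OF assms(1)] .
  have "nrm (u - v) \<le> \<eta> * dual_norm nrm ((\<Sum>s\<in>S. g s) - (\<Sum>s\<in>J. g s))"
    using assms(1,4) v by (rule dda_minimizer_lipschitz)
  also have "dual_norm nrm ((\<Sum>s\<in>S. g s) - (\<Sum>s\<in>J. g s)) \<le> (\<Sum>q\<in>S - J. dual_norm nrm (g q))"
    using dual_norm_sum_le[of g "S - J"] assms(2,3) by (simp add: sum_diff)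
  finally have dist: "nrm (u - v) \<le> \<eta> * (\<Sum>q\<in>S - J. dual_norm nrm (g q))"
    using assms(1) by simp
  have "g' \<bullet> (u - v) \<le> dual_norm nrm g' * nrm (u - v)"
    by (rule inner_le_dual_norm_mult)
  also have "\<dots> \<le> dual_norm nrm g' * (\<eta> * (\<Sum>q\<in>S - J. dual_norm nrm (g q)))"
    using dist dual_norm_nonneg by (rule mult_left_mono)
  finally show ?thesis
    using dda_value_step[OF assms(1) v, of g'] by (simp add: algebra_simps)
qed

(* Be-the-leader along rank: the rank-maximal round m has seen all gradients of the earlier
   rounds S except those in S - I m, so x m is compared with the minimiser for S at step size eta m. *)
lemma dda_inner_sum_le:
  fixes rank :: "'b \<Rightarrow> 'c::linorder" and I :: "'b \<Rightarrow> 'b set" and g x :: "'b \<Rightarrow> 'a"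
  assumes "finite K" "inj_on rank K"
    and "\<And>t. t \<in> K \<Longrightarrow> I t \<subseteq> {q\<in>K. rank q < rank t}"
    and "\<And>t. t \<in> K \<Longrightarrow> 0 < \<eta> t"
    and "\<And>q t. q \<in> K \<Longrightarrow> t \<in> K \<Longrightarrow> rank q < rank t \<Longrightarrow> \<eta> t \<le> \<eta> q"
    and "\<And>t. t \<in> K \<Longrightarrow> dda_minimizer (\<Sum>s\<in>I t. g s) (\<eta> t) (x t)"
    and "0 < \<eta>'" "\<And>t. t \<in> K \<Longrightarrow> \<eta>' \<le> \<eta> t"
  shows "(\<Sum>t\<in>K. g t \<bullet> x t) \<le> dda_value (\<Sum>t\<in>K. g t) \<eta>'
    + (\<Sum>t\<in>K. \<eta> t * ((dual_norm nrm (g t))\<^sup>2 / 2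
         + dual_norm nrm (g t) * (\<Sum>q\<in>{q\<in>K. rank q < rank t} - I t. dual_norm nrm (g q))))"
  using assms(1-6,8) assms(7)
proof (induction K arbitrary: \<eta>' rule: finite_ranking_induct[where f = rank])
  case empty
  then show ?case
    using dda_value_zero_nonneg by simp
next
  case (insert m S)
  show ?case
  proof (cases "m \<in> S")
    case True
    with insert.prems show ?thesis
      by (simp add: insert_absorb insert.IH)
  next
    case False
    let ?a = "\<lambda>t. dual_norm nrm (g t)"
    let ?err = "\<lambda>K t. \<eta> t * ((?a t)\<^sup>2 / 2 + ?a t * (\<Sum>q\<in>{q\<in>K. rank q < rank t} - I t. ?a q))"
    have before_m: "{q\<in>insert m S. rank q < rank m} = S"
      using insert.prems(1) False insert.hyps(2) by (rule before_insert_max_rank(1))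
    have before_S: "{q\<in>insert m S. rank q < rank t} = {q\<in>S. rank q < rank t}" if "t \<in> S" for t
      using insert.prems(1) False insert.hyps(2) that by (rule before_insert_max_rank(2))
    have eta_m: "0 < \<eta> m"
      using insert.prems(3) by simp
    have IH: "(\<Sum>t\<in>S. g t \<bullet> x t) \<le> dda_value (\<Sum>t\<in>S. g t) (\<eta> m) + (\<Sum>t\<in>S. ?err S t)"
    proof (rule insert.IH)
      show "inj_on rank S"
        using insert.prems(1) by (rule inj_on_subset) blast
      show "I t \<subseteq> {q\<in>S. rank q < rank t}" if "t \<in> S" for t
        using insert.prems(2)[of t] before_S[OF that] that by auto
      show "\<eta> m \<le> \<eta> t" if "t \<in> S" for t
        using insert.prems(4)[of t m] before_m that by auto
    qed (use insert.prems eta_m in auto)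
    have "I m \<subseteq> S"
      using insert.prems(2)[of m] before_m by simp
    have "g m \<bullet> x m \<le> dda_value ((\<Sum>t\<in>S. g t) + g m) (\<eta> m) - dda_value (\<Sum>t\<in>S. g t) (\<eta> m)
        + \<eta> m * ((?a m)\<^sup>2 / 2 + ?a m * (\<Sum>q\<in>S - I m. ?a q))"
      using eta_m insert.hyps(1) \<open>I m \<subseteq> S\<close> insert.prems(5)[OF insertI1] by (rule dda_value_delayed_step)
    moreover have "dda_value ((\<Sum>t\<in>S. g t) + g m) (\<eta> m) \<le> dda_value ((\<Sum>t\<in>S. g t) + g m) \<eta>'"
      using insert.prems(6,7) by (intro dda_value_antimono) auto
    moreover have "(\<Sum>t\<in>insert m S. ?err (insert m S) t)
        = \<eta> m * ((?a m)\<^sup>2 / 2 + ?a m * (\<Sum>q\<in>S - I m. ?a q)) + (\<Sum>t\<in>S. ?err S t)"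
      using insert.hyps(1) False before_S before_m by simp
    ultimately show ?thesis
      using IH insert.hyps(1) False by (simp add: add.commute)
  qed
qed

end

section \<open>Feedback with bounded delay\<close>

locale bounded_delay_feedback =
  fixes T \<tau> :: nat and I :: "nat \<Rightarrow> nat set" and a :: "nat \<Rightarrow> real" and G :: real
  assumes info_past: "\<And>t. t \<in> {1..T} \<Longrightarrow> I t \<subseteq> {1..<t}"
    and info_delay: "\<And>t. t \<in> {1..T} \<Longrightarrow> {1..t - \<tau> - 1} \<subseteq> I t"
    and info_nested: "\<And>s t. t \<in> {1..T} \<Longrightarrow> s \<in> I t \<Longrightarrow> I s \<subseteq> I t"
    and weight_nonneg: "\<And>t. 0 \<le> a t"
    and weight_le: "\<And>t. t \<in> {1..T} \<Longrightarrow> a t \<le> G"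
begin

definition concurrent :: "nat \<Rightarrow> nat \<Rightarrow> bool" where
  "concurrent q s \<longleftrightarrow> q \<notin> I s \<and> s \<notin> I q"

(* For the protocol, lag (I t) is the paper's L-hat t and lag {1..T} is L T
   (lemmas lag_hat_eq and lag_all_eq). *)
definition lag :: "nat set \<Rightarrow> real" where
  "lag Y = (\<Sum>q\<in>Y. \<Sum>s\<in>{s\<in>Y. concurrent q s}. a q * a s)"

(* The lexicographic order of (lag (I t), t) on {1..T}, encoded as a natural number. *)
definition rank :: "nat \<Rightarrow> nat" where
  "rank t = (T + 1) * card {q\<in>{1..T}. lag (I q) < lag (I t)} + t"

definition rank_prefix :: "nat \<Rightarrow> nat set" where
  "rank_prefix t = {q\<in>{1..T}. rank q \<le> rank t}"

definition lag_increment :: "nat \<Rightarrow> real" where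
  "lag_increment t = (a t)\<^sup>2 + 2 * a t * (\<Sum>q\<in>{q\<in>{1..T}. rank q < rank t} - I t. a q)"

lemma info_subset: "t \<in> {1..T} \<Longrightarrow> I t \<subseteq> {1..T}"
  using info_past by fastforce

lemma finite_info: "t \<in> {1..T} \<Longrightarrow> finite (I t)"
  using info_subset finite_subset by blast

lemma info_if_delayed: "t \<in> {1..T} \<Longrightarrow> 1 \<le> q \<Longrightarrow> q + \<tau> < t \<Longrightarrow> q \<in> I t"
  using info_delay by fastforce

lemma symp_concurrent: "symp concurrent"
  unfolding concurrent_def by (auto intro: sympI)

lemma concurrent_refl: "t \<in> {1..T} \<Longrightarrow> concurrent t t"
  unfolding concurrent_def using info_past by fastforce

lemma concurrent_le_delay: "q \<in> {1..T} \<Longrightarrow> s \<in> {1..T} \<Longrightarrow> concurrent q s \<Longrightarrow> q \<le> s + \<tau>"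
  unfolding concurrent_def using info_if_delayed[of q s] by fastforce

lemma lag_nonneg: "0 \<le> lag Y"
  unfolding lag_def by (intro sum_nonneg mult_nonneg_nonneg weight_nonneg)

lemma lag_mono:
  assumes "finite Z" "Y \<subseteq> Z"
  shows "lag Y \<le> lag Z"
proof -
  have "lag Y \<le> (\<Sum>q\<in>Y. \<Sum>s\<in>{s\<in>Z. concurrent q s}. a q * a s)"
    unfolding lag_def using assms
    by (intro sum_mono sum_mono2) (auto intro: mult_nonneg_nonneg weight_nonneg)
  also have "\<dots> \<le> lag Z"
    unfolding lag_def using assms
    by (intro sum_mono2 sum_nonneg) (auto intro: mult_nonneg_nonneg weight_nonneg)
  finally show ?thesis .
qed

lemma lag_Sigma:
  "finite Y \<Longrightarrow> lag Y = (\<Sum>(q, s)\<in>Sigma Y (\<lambda>q. {s\<in>Y. concurrent q s}). a q * a s)"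
  unfolding lag_def by (subst sum.Sigma) auto

lemma rank_mod: "t \<in> {1..T} \<Longrightarrow> rank t mod (T + 1) = t"
  unfolding rank_def mod_mult_self4 by simp

lemma inj_on_rank: "inj_on rank {1..T}"
proof (rule inj_onI)
  fix q t
  assume "q \<in> {1..T}" "t \<in> {1..T}" "rank q = rank t"
  then show "q = t"
    using rank_mod[of q] rank_mod[of t] by simp
qed

lemma lag_le_if_rank_less:
  assumes "q \<in> {1..T}" "t \<in> {1..T}" "rank q < rank t"
  shows "lag (I q) \<le> lag (I t)"
proof (rule ccontr)
  let ?below = "\<lambda>t. {p\<in>{1..T}. lag (I p) < lag (I t)}"
  assume "\<not> ?thesis"
  then have "?below t \<subseteq> ?below q" "t \<in> ?below q" "t \<notin> ?below t"
    using assms(2) by auto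
  then have "card (?below t) < card (?below q)"
    by (intro psubset_card_mono) auto
  have "rank t < (T + 1) * (card (?below t) + 1)"
    using assms(2) unfolding rank_def by simp
  also have "\<dots> \<le> (T + 1) * card (?below q)"
    using \<open>card (?below t) < card (?below q)\<close> by (intro mult_le_mono2) simp
  also have "\<dots> \<le> rank q"
    unfolding rank_def by simp
  finally show False
    using assms(3) by simp
qed

lemma rank_less_if_info:
  assumes "t \<in> {1..T}" "q \<in> I t"
  shows "rank q < rank t"
proof -
  have "q \<in> {1..<t}"
    using info_past assms by blast
  moreover have "lag (I q) \<le> lag (I t)"
    using assms by (intro lag_mono finite_info info_nested)
  then have "card {p\<in>{1..T}. lag (I p) < lag (I q)} \<le> card {p\<in>{1..T}. lag (I p) < lag (I t)}"
    by (intro card_mono) auto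
  ultimately show ?thesis
    unfolding rank_def by (intro add_le_less_mono mult_le_mono2) auto
qed

lemma le_delay_if_rank_le:
  assumes "q \<in> {1..T}" "t \<in> {1..T}" "rank q \<le> rank t"
  shows "q \<le> t + \<tau>"
proof (rule ccontr)
  assume "\<not> q \<le> t + \<tau>"
  then have "rank t < rank q"
    using assms by (intro rank_less_if_info info_if_delayed) auto
  then show False
    using assms(3) by simp
qed

lemma sum_lag_increment_eq:
  assumes "A \<subseteq> {1..T}" "\<And>p q. q \<in> A \<Longrightarrow> p \<in> {1..T} \<Longrightarrow> rank p < rank q \<Longrightarrow> p \<in> A"
  shows "(\<Sum>q\<in>A. lag_increment q) = lag A"
proof -
  have "finite A"
    using assms(1) finite_subset by blast
  have "{p\<in>{1..T}. rank p < rank q} - I q = {p\<in>A. rank p < rank q \<and> concurrent p q}"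
    if "q \<in> A" for q
  proof -
    have "q \<notin> I p" if "p \<in> {1..T}" "rank p < rank q" for p
      using rank_less_if_info[OF that(1)] that(2) by fastforce
    then show ?thesis
      using assms that unfolding concurrent_def by blast
  qed
  then have "(\<Sum>q\<in>A. lag_increment q)
      = (\<Sum>q\<in>A. a q * a q + 2 * a q * (\<Sum>p\<in>{p\<in>A. rank p < rank q \<and> concurrent p q}. a p))"
    unfolding lag_increment_def power2_eq_square by simp
  also have "\<dots> = lag A"
    unfolding lag_def using \<open>finite A\<close> inj_on_subset[OF inj_on_rank assms(1)] symp_concurrent
      concurrent_refl assms(1)
    by (intro sum_symmetric_pairs_eq[symmetric]) auto
  finally show ?thesis .
qed

lemma info_subset_rank_prefix: "t \<in> {1..T} \<Longrightarrow> I t \<subseteq> rank_prefix t"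
  unfolding rank_prefix_def using info_subset rank_less_if_info by fastforce

lemma card_new_concurrent_pairs_le:
  assumes "t \<in> {1..T}"
  shows "card (Sigma (rank_prefix t) (\<lambda>q. {s\<in>rank_prefix t. concurrent q s})
    - Sigma (I t) (\<lambda>q. {s\<in>I t. concurrent q s})) \<le> (2 * \<tau> + 1)\<^sup>2"
proof (rule card_pairs_within_delay_le[of _ t])
  fix q s
  assume "(q, s) \<in> Sigma (rank_prefix t) (\<lambda>q. {s\<in>rank_prefix t. concurrent q s})
    - Sigma (I t) (\<lambda>q. {s\<in>I t. concurrent q s})"
  then have qs: "q \<in> rank_prefix t" "s \<in> rank_prefix t" "concurrent q s" "q \<notin> I t \<or> s \<notin> I t"
    by auto
  then have "q \<in> {1..T}" "s \<in> {1..T}" "rank q \<le> rank t" "rank s \<le> rank t"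
    unfolding rank_prefix_def by auto
  moreover have "concurrent s q"
    using qs(3) symp_concurrent by (rule sympD[rotated])
  moreover have "t \<le> q + \<tau> \<or> t \<le> s + \<tau>"
    using qs(4) info_if_delayed[OF assms, of q] info_if_delayed[OF assms, of s] calculation(1,2)
    by fastforce
  ultimately show "q \<le> t + \<tau> \<and> s \<le> t + \<tau> \<and> q \<le> s + \<tau> \<and> s \<le> q + \<tau> \<and> (t \<le> q + \<tau> \<or> t \<le> s + \<tau>)"
    using assms qs(3) by (simp add: le_delay_if_rank_le concurrent_le_delay)
qed

lemma lag_rank_prefix_le:
  assumes "t \<in> {1..T}"
  shows "lag (rank_prefix t) \<le> lag (I t) + G\<^sup>2 * (2 * real \<tau> + 1)\<^sup>2"
proof -
  define PA where "PA = Sigma (rank_prefix t) (\<lambda>q. {s\<in>rank_prefix t. concurrent q s})"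
  define PI where "PI = Sigma (I t) (\<lambda>q. {s\<in>I t. concurrent q s})"
  have "finite (rank_prefix t)" "finite PA"
    unfolding PA_def rank_prefix_def by auto
  have "PI \<subseteq> PA"
    unfolding PI_def PA_def using info_subset_rank_prefix[OF assms] by auto
  have "lag (rank_prefix t) - lag (I t) = (\<Sum>(q, s)\<in>PA - PI. a q * a s)"
    unfolding lag_Sigma[OF \<open>finite (rank_prefix t)\<close>] lag_Sigma[OF finite_info[OF assms]]
      PA_def[symmetric] PI_def[symmetric]
    by (rule sum_diff[OF \<open>finite PA\<close> \<open>PI \<subseteq> PA\<close>, symmetric])
  also have "\<dots> \<le> (\<Sum>(q, s)\<in>PA - PI. G\<^sup>2)"
  proof (rule sum_mono, clarify)
    fix q s
    assume "(q, s) \<in> PA"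
    then have "q \<in> {1..T}" "s \<in> {1..T}"
      unfolding PA_def rank_prefix_def by auto
    moreover have "0 \<le> G"
      using weight_nonneg[of q] weight_le[OF \<open>q \<in> {1..T}\<close>] by linarith
    ultimately show "a q * a s \<le> G\<^sup>2"
      unfolding power2_eq_square by (intro mult_mono weight_le weight_nonneg)
  qed
  also have "\<dots> = real (card (PA - PI)) * G\<^sup>2"
    by simp
  also have "\<dots> \<le> (2 * real \<tau> + 1)\<^sup>2 * G\<^sup>2"
  proof (rule mult_right_mono)
    have "real (card (PA - PI)) \<le> real ((2 * \<tau> + 1)\<^sup>2)"
      using card_new_concurrent_pairs_le[OF assms] unfolding PA_def PI_def by (simp only: of_nat_le_iff)
    then show "real (card (PA - PI)) \<le> (2 * real \<tau> + 1)\<^sup>2"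
      by (simp add: add.commute)
  qed simp
  finally show ?thesis
    by (simp add: mult.commute)
qed

lemma lag_all_eq: "(\<Sum>s=1..T. (a s)\<^sup>2 + 2 * a s * (\<Sum>q\<in>{1..<s} - I s. a q)) = lag {1..T}"
proof -
  have "{1..<s} - I s = {q\<in>{1..T}. q < s \<and> concurrent q s}" if "s \<in> {1..T}" for s
    using that info_past unfolding concurrent_def by fastforce
  then have "(\<Sum>s=1..T. (a s)\<^sup>2 + 2 * a s * (\<Sum>q\<in>{1..<s} - I s. a q))
      = (\<Sum>s\<in>{1..T}. a s * a s + 2 * a s * (\<Sum>q\<in>{q\<in>{1..T}. id q < id s \<and> concurrent q s}. a q))"
    unfolding power2_eq_square by simp
  also have "\<dots> = lag {1..T}"
    unfolding lag_def using symp_concurrent concurrent_refl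
    by (intro sum_symmetric_pairs_eq[symmetric]) auto
  finally show ?thesis .
qed

definition lag_bound :: "nat \<Rightarrow> real" where
  "lag_bound t = sqrt (lag (I t) + G\<^sup>2 * (2 * real \<tau> + 1)\<^sup>2)"

lemma lag_bound_nonneg: "0 \<le> lag_bound t"
  unfolding lag_bound_def using lag_nonneg by simp

lemma lag_bound_pos: "0 < G \<Longrightarrow> 0 < lag_bound t"
  unfolding lag_bound_def using lag_nonneg by (simp add: add_nonneg_pos)

lemma lag_bound_le_if_rank_less: "q \<in> {1..T} \<Longrightarrow> t \<in> {1..T} \<Longrightarrow> rank q < rank t \<Longrightarrow> lag_bound q \<le> lag_bound t"
  unfolding lag_bound_def using lag_le_if_rank_less by simp

lemma Max_lag_bound_le:
  assumes "1 \<le> T"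
  shows "(MAX t\<in>{1..T}. lag_bound t) \<le> sqrt (lag {1..T} + G\<^sup>2 * (2 * real \<tau> + 1)\<^sup>2)"
  unfolding lag_bound_def using assms lag_mono[OF _ info_subset] by (intro Max.boundedI) auto

lemma lag_increment_nonneg: "0 \<le> lag_increment t"
  unfolding lag_increment_def using weight_nonneg by (intro add_nonneg_nonneg mult_nonneg_nonneg sum_nonneg) auto

lemma sum_lag_increment_rank_prefix_le:
  assumes "t \<in> {1..T}"
  shows "(\<Sum>q\<in>rank_prefix t. lag_increment q) \<le> (lag_bound t)\<^sup>2"
proof -
  have "(\<Sum>q\<in>rank_prefix t. lag_increment q) = lag (rank_prefix t)"
    unfolding rank_prefix_def by (rule sum_lag_increment_eq) auto
  also have "\<dots> \<le> (lag_bound t)\<^sup>2"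
    unfolding lag_bound_def using lag_rank_prefix_le[OF assms] lag_nonneg by simp
  finally show ?thesis .
qed

lemma sum_lag_increment_divide_le:
  assumes "1 \<le> T"
  shows "(\<Sum>t\<in>{1..T}. lag_increment t / lag_bound t) \<le> 2 * (MAX t\<in>{1..T}. lag_bound t)"
proof -
  have "Max (rank ` {1..T}) \<in> rank ` {1..T}"
    using assms by (intro Max_in) auto
  then obtain m where m: "Max (rank ` {1..T}) = rank m" "m \<in> {1..T}"
    by (rule imageE)
  then have "rank q \<le> rank m" if "q \<in> {1..T}" for q
    using that by (simp add: m(1)[symmetric])
  then have "rank_prefix m = {1..T}"
    unfolding rank_prefix_def by blast
  have "(\<Sum>t\<in>{1..T}. lag_increment t / lag_bound t) \<le> 2 * sqrt (\<Sum>t\<in>{1..T}. lag_increment t)"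
    using lag_increment_nonneg lag_bound_nonneg sum_lag_increment_rank_prefix_le
    unfolding rank_prefix_def by (intro sum_divide_prefix_bound_le[where rank = rank]) auto
  also have "(\<Sum>t\<in>{1..T}. lag_increment t) \<le> (lag_bound m)\<^sup>2"
    using sum_lag_increment_rank_prefix_le[OF m(2)] unfolding \<open>rank_prefix m = {1..T}\<close> .
  then have "sqrt (\<Sum>t\<in>{1..T}. lag_increment t) \<le> lag_bound m"
    by (rule real_le_lsqrt[OF lag_bound_nonneg])
  also have "\<dots> \<le> (MAX t\<in>{1..T}. lag_bound t)"
    using m(2) by simp
  finally show ?thesis
    by simp
qed

end

section \<open>Delayed dual averaging\<close>

lemma subdiff_real_le:
  assumes "g \<in> subdiff f x" "p \<in> dom_subdiff f"
  shows "real_of_ereal (f x) - real_of_ereal (f p) \<le> g \<bullet> (x - p)"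
proof -
  have "\<bar>f x\<bar> \<noteq> \<infinity>" "f x + ereal (g \<bullet> (p - x)) \<le> f p" "\<bar>f p\<bar> \<noteq> \<infinity>"
    using assms unfolding subdiff_def dom_subdiff_def by auto
  then show ?thesis
    by (cases "f x"; cases "f p") (auto simp: inner_diff_right)
qed

locale delayed_dda =
  strongly_convex_regularizer nrm X h + bounded_delay_feedback T \<tau> I "\<lambda>t. dual_norm nrm (g t)" G
  for nrm :: "'a::euclidean_space \<Rightarrow> real" and X h T \<tau> I and g :: "nat \<Rightarrow> 'a" and G +
  fixes x :: "nat \<Rightarrow> 'a" and r :: real
  assumes r_pos: "0 < r"
    and dda_step: "\<And>t. t \<in> {1..T} \<Longrightarrow> dda_minimizer (\<Sum>s\<in>I t. g s) (r / lag_bound t) (x t)"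
begin

lemma sum_inner_iterates_le:
  assumes "0 < G" "0 < \<eta>'" "\<And>t. t \<in> {1..T} \<Longrightarrow> \<eta>' \<le> r / lag_bound t"
  shows "(\<Sum>t\<in>{1..T}. g t \<bullet> x t)
    \<le> dda_value (\<Sum>t\<in>{1..T}. g t) \<eta>' + r / 2 * (\<Sum>t\<in>{1..T}. lag_increment t / lag_bound t)"
proof -
  have "(\<Sum>t\<in>{1..T}. g t \<bullet> x t) \<le> dda_value (\<Sum>t\<in>{1..T}. g t) \<eta>'
      + (\<Sum>t\<in>{1..T}. r / lag_bound t * ((dual_norm nrm (g t))\<^sup>2 / 2 + dual_norm nrm (g t)
          * (\<Sum>q\<in>{q\<in>{1..T}. rank q < rank t} - I t. dual_norm nrm (g q))))"
  proof (rule dda_inner_sum_le[where rank = rank])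
    show "I t \<subseteq> {q\<in>{1..T}. rank q < rank t}" if "t \<in> {1..T}" for t
      using info_subset[OF that] rank_less_if_info[OF that] by blast
    show "r / lag_bound t \<le> r / lag_bound q" if "q \<in> {1..T}" "t \<in> {1..T}" "rank q < rank t" for q t
      using lag_bound_le_if_rank_less[OF that] lag_bound_pos[OF assms(1)] r_pos
      by (intro divide_left_mono) auto
  qed (use inj_on_rank dda_step lag_bound_pos[OF assms(1)] r_pos assms(2,3) in auto)
  also have "(\<Sum>t\<in>{1..T}. r / lag_bound t * ((dual_norm nrm (g t))\<^sup>2 / 2 + dual_norm nrm (g t)
          * (\<Sum>q\<in>{q\<in>{1..T}. rank q < rank t} - I t. dual_norm nrm (g q))))
      = r / 2 * (\<Sum>t\<in>{1..T}. lag_increment t / lag_bound t)"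
    unfolding lag_increment_def sum_distrib_left[of "r / 2"] by (intro sum.cong) (auto simp: field_simps)
  finally show ?thesis .
qed

lemma linear_regret_nonpos_if_G_nonpos:
  assumes "\<not> 0 < G"
  shows "(\<Sum>t=1..T. g t \<bullet> (x t - p)) \<le> 0"
proof (rule sum_nonpos)
  fix t
  assume "t \<in> {1..T}"
  then have "dual_norm nrm (g t) = 0"
    using weight_le assms dual_norm_nonneg[of "g t"] by force
  then show "g t \<bullet> (x t - p) \<le> 0"
    using inner_le_dual_norm_mult[of "g t" "x t - p"] by simp
qed

lemma linear_regret_le:
  assumes "1 \<le> T" "p \<in> X" "h p \<le> ereal (r\<^sup>2)"
  shows "(\<Sum>t=1..T. g t \<bullet> (x t - p)) \<le> 2 * r * (MAX t\<in>{1..T}. lag_bound t)"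
proof -
  define M where "M = (MAX t\<in>{1..T}. lag_bound t)"
  have le_M: "lag_bound t \<le> M" if "t \<in> {1..T}" for t
    unfolding M_def using that by simp
  have "0 \<le> M"
    using le_M[of 1] lag_bound_nonneg[of 1] assms(1) by simp
  show ?thesis
  proof (cases "0 < G")
    case False
    (* then all gradients vanish and the step sizes r / lag_bound t are the junk value r / 0 *)
    moreover have "0 \<le> 2 * r * M"
      using \<open>0 \<le> M\<close> r_pos by simp
    ultimately show ?thesis
      using linear_regret_nonpos_if_G_nonpos[of p] unfolding M_def by linarith
  next
    case True
    then have "0 < M"
      using le_M[of 1] lag_bound_pos[of 1] assms(1) by simp
    (* the leader is taken at the smallest step size r / M, so that h p / (r / M) <= r * M *)
    have "r / M \<le> r / lag_bound t" if "t \<in> {1..T}" for t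
      using le_M[OF that] lag_bound_pos[OF True] r_pos \<open>0 < M\<close> by (intro divide_left_mono) auto
    with True have "(\<Sum>t\<in>{1..T}. g t \<bullet> x t)
        \<le> dda_value (\<Sum>t\<in>{1..T}. g t) (r / M) + r / 2 * (\<Sum>t\<in>{1..T}. lag_increment t / lag_bound t)"
      using r_pos \<open>0 < M\<close> by (intro sum_inner_iterates_le) auto
    also have "r / 2 * (\<Sum>t\<in>{1..T}. lag_increment t / lag_bound t) \<le> r * M"
      using sum_lag_increment_divide_le[OF assms(1)] r_pos unfolding M_def by simp
    also have "dda_value (\<Sum>t\<in>{1..T}. g t) (r / M) \<le> (\<Sum>t\<in>{1..T}. g t) \<bullet> p + hr p / (r / M)"
      using dda_value_le[of "r / M" p] r_pos \<open>0 < M\<close> assms(2) unfolding dda_objective_def by simp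
    also have "hr p / (r / M) \<le> r * M"
    proof -
      have "ereal (hr p) \<le> ereal (r\<^sup>2)"
        unfolding ereal_hr[OF assms(2)] by (rule assms(3))
      then show ?thesis
        using r_pos \<open>0 < M\<close> by (simp add: field_simps power2_eq_square mult_right_mono)
    qed
    finally show ?thesis
      unfolding M_def by (simp add: inner_diff_right sum_subtractf inner_sum_left)
  qed
qed

end

section \<open>Arrival orders of the agents\<close>

lemma bij_betw_image_eq:
  assumes "bij_betw f A B" "J \<subseteq> A"
  shows "f ` J = {y\<in>B. the_inv_into A f y \<in> J}"
proof -
  have "inj_on f A" "f ` A = B"
    using assms(1) unfolding bij_betw_def by auto
  then show ?thesis
    using assms(2) by (auto simp: the_inv_into_f_f f_the_inv_into_f image_iff intro: the_inv_into_into)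
qed

locale arrival_orders =
  fixes T :: nat and agent :: "nat \<Rightarrow> 'i" and S :: "'i \<Rightarrow> nat \<Rightarrow> nat set"
    and sig :: "'i \<Rightarrow> nat \<Rightarrow> nat"
  assumes info_past: "\<And>i t. t \<in> {1..T} \<Longrightarrow> S i t \<subseteq> {1..<t}"
    and bij_sig: "\<And>i. bij_betw (sig i) {1..T} {1..T}"
    and info_arrived: "\<And>i t. t \<in> {1..T} \<Longrightarrow> S i t = sig i ` {1..card (S i t)}"
    and info_received_before: "\<And>i t. t \<in> {1..T} \<Longrightarrow> S (agent t) t \<subseteq> recv_before T sig i t"
begin

definition arrival :: "'i \<Rightarrow> nat \<Rightarrow> nat" where
  "arrival i q = the_inv_into {1..T} (sig i) q"

lemma bij_arrival: "bij_betw (arrival i) {1..T} {1..T}"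
  unfolding arrival_def[abs_def] by (rule bij_betw_the_inv_into[OF bij_sig])

lemma sig_image_eq: "J \<subseteq> {1..T} \<Longrightarrow> sig i ` J = {q\<in>{1..T}. arrival i q \<in> J}"
  unfolding arrival_def by (rule bij_betw_image_eq[OF bij_sig])

lemma recv_before_eq:
  assumes "s \<in> {1..T}"
  shows "recv_before T sig i s = {q\<in>{1..T}. arrival i q < arrival i s}"
proof -
  have "arrival i s \<in> {1..T}" "\<And>q. q \<in> {1..T} \<Longrightarrow> 1 \<le> arrival i q"
    using bij_betwE[OF bij_arrival] assms by auto
  then show ?thesis
    unfolding recv_before_def arrival_def[symmetric] by (subst sig_image_eq) auto
qed

lemma info_eq:
  assumes "t \<in> {1..T}"
  shows "S i t = {q\<in>{1..T}. arrival i q \<le> card (S i t)}"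
proof -
  have "card (S i t) \<le> card {1..<t}"
    using info_past[OF assms] by (intro card_mono) auto
  then have "{1..card (S i t)} \<subseteq> {1..T}"
    using assms by auto
  moreover have "\<And>q. q \<in> {1..T} \<Longrightarrow> 1 \<le> arrival i q"
    using bij_betwE[OF bij_arrival] by auto
  ultimately show ?thesis
    by (subst info_arrived[OF assms]) (auto simp: sig_image_eq)
qed

lemma arrival_less_if_info:
  assumes "t \<in> {1..T}" "q \<in> S (agent t) t"
  shows "arrival i q < arrival i t"
proof -
  have "q \<in> recv_before T sig i t"
    using info_received_before[OF assms(1)] assms(2) by blast
  then show ?thesis
    unfolding recv_before_eq[OF assms(1)] by simp
qed

lemma info_if_arrival_le:
  assumes "t \<in> {1..T}" "s \<in> S (agent t) t" "q \<in> {1..T}" "arrival (agent t) q \<le> arrival (agent t) s"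
  shows "q \<in> S (agent t) t"
proof -
  have "s \<in> {q\<in>{1..T}. arrival (agent t) q \<le> card (S (agent t) t)}"
    using assms(2) by (simp only: info_eq[OF assms(1), symmetric])
  then have "q \<in> {q\<in>{1..T}. arrival (agent t) q \<le> card (S (agent t) t)}"
    using assms(3,4) by simp
  then show ?thesis
    by (simp only: info_eq[OF assms(1), symmetric])
qed

lemma info_nested:
  assumes "t \<in> {1..T}" "s \<in> S (agent t) t"
  shows "S (agent s) s \<subseteq> S (agent t) t"
proof
  fix q
  assume "q \<in> S (agent s) s"
  have "s \<in> {1..T}"
    using info_past[OF assms(1)] assms by fastforce
  then have "q \<in> {1..T}"
    using info_past \<open>q \<in> S (agent s) s\<close> by fastforce
  moreover have "arrival (agent t) q < arrival (agent t) s"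
    using \<open>s \<in> {1..T}\<close> \<open>q \<in> S (agent s) s\<close> by (rule arrival_less_if_info)
  ultimately show "q \<in> S (agent t) t"
    using info_if_arrival_le[OF assms] by simp
qed

lemma lag_hat_eq:
  fixes a :: "nat \<Rightarrow> real"
  assumes "t \<in> {1..T}"
  shows "(\<Sum>s\<in>S (agent t) t. (a s)\<^sup>2 + 2 * a s * (\<Sum>q\<in>recv_before T sig (agent t) s - S (agent s) s. a q))
    = (\<Sum>q\<in>S (agent t) t. \<Sum>s\<in>{s\<in>S (agent t) t. q \<notin> S (agent s) s \<and> s \<notin> S (agent q) q}. a q * a s)"
proof -
  let ?I = "\<lambda>u. S (agent u) u" and ?i = "agent t"
  let ?R = "\<lambda>q s. q \<notin> ?I s \<and> s \<notin> ?I q"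
  have I_sub: "?I t \<subseteq> {1..T}"
    using info_past[OF assms] assms by fastforce
  have "recv_before T sig ?i s - ?I s = {q\<in>?I t. arrival ?i q < arrival ?i s \<and> ?R q s}"
    if "s \<in> ?I t" for s
  proof -
    have "s \<in> {1..T}"
      using I_sub that by blast
    have "s \<notin> ?I q" if "q \<in> {1..T}" "arrival ?i q < arrival ?i s" for q
      using arrival_less_if_info[OF that(1), of s ?i] that(2) by fastforce
    moreover have "q \<in> ?I t" if "q \<in> {1..T}" "arrival ?i q < arrival ?i s" for q
      using info_if_arrival_le[OF assms \<open>s \<in> ?I t\<close> that(1)] that(2) by simp
    ultimately show ?thesis
      unfolding recv_before_eq[OF \<open>s \<in> {1..T}\<close>] using I_sub by blast
  qed
  then have "(\<Sum>s\<in>?I t. (a s)\<^sup>2 + 2 * a s * (\<Sum>q\<in>recv_before T sig ?i s - ?I s. a q))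
      = (\<Sum>s\<in>?I t. a s * a s + 2 * a s * (\<Sum>q\<in>{q\<in>?I t. arrival ?i q < arrival ?i s \<and> ?R q s}. a q))"
    by (simp add: power2_eq_square)
  also have "\<dots> = (\<Sum>q\<in>?I t. \<Sum>s\<in>{s\<in>?I t. ?R q s}. a q * a s)"
  proof (rule sum_symmetric_pairs_eq[symmetric])
    show "finite (?I t)"
      using I_sub finite_subset by blast
    show "inj_on (arrival ?i) (?I t)"
      using bij_betw_imp_inj_on[OF bij_arrival] I_sub by (rule inj_on_subset)
    show "symp ?R"
      by (auto intro: sympI)
    show "?R q q" if "q \<in> ?I t" for q
      using info_past[of q] I_sub that by fastforce
  qed
  finally show ?thesis .
qed

end

theorem proposition5:
  fixes nrm :: "'a::euclidean_space \<Rightarrow> real"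
    and X :: "'a set"
    and h :: "'a \<Rightarrow> ereal"
    and T :: nat
    and agent :: "nat \<Rightarrow> 'i"
    and S :: "'i \<Rightarrow> nat \<Rightarrow> nat set"
    and sig :: "'i \<Rightarrow> nat \<Rightarrow> nat"
    and f :: "nat \<Rightarrow> 'a \<Rightarrow> ereal"
    and x g :: "nat \<Rightarrow> 'a"
    and \<eta> :: "nat \<Rightarrow> real"
    and r G :: real
    and \<tau> :: nat
    and p :: 'a
  assumes norm: "is_norm nrm"
    and X_closed: "closed X" and X_convex: "convex X"
    and h_lsc: "lower_semicont h"
    and h_sc: "strongly_convex_on nrm X h"
    and X_dom_h: "\<forall>y\<in>X. h y < \<infinity>"
    and h_sel: "\<exists>sel. continuous_on (dom_subdiff h) sel \<and>
                  (\<forall>y\<in>dom_subdiff h. sel y \<in> subdiff h y)"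
    and h_nonneg: "\<forall>y. h y \<ge> 0"
    and T_pos: "T \<ge> 1"
    and f_convex: "\<forall>t\<in>{1..T}. convex_ext (f t)"
    and X_dom_f: "\<forall>t\<in>{1..T}. X \<subseteq> dom_subdiff (f t)"
    and g_sub: "\<forall>t\<in>{1..T}. g t \<in> subdiff (f t) (x t)"
    and S_sub: "\<forall>i. \<forall>t\<in>{1..T}. S i t \<subseteq> {1..<t}"
    and S_mono: "\<forall>i. \<forall>t\<in>{1..T}. \<forall>t'\<in>{1..T}. t \<le> t' \<longrightarrow> S i t \<subseteq> S i t'"
    and sig_perm: "\<forall>i. bij_betw (sig i) {1..T} {1..T}"
    and sig_cons: "\<forall>i. \<forall>t\<in>{1..T}. S i t = sig i ` {1..card (S i t)}"
    and dda_in: "\<forall>t\<in>{1..T}. x t \<in> X"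
    and dda_min: "\<forall>t\<in>{1..T}. \<forall>y\<in>X.
        (\<Sum>s\<in>S (agent t) t. g s \<bullet> x t) + real_of_ereal (h (x t)) / \<eta> t
          \<le> (\<Sum>s\<in>S (agent t) t. g s \<bullet> y) + real_of_ereal (h y) / \<eta> t"
    and r_pos: "r > 0"
    and delay: "\<forall>t\<in>{1..T}. {1..t - \<tau> - 1} \<subseteq> S (agent t) t"
    and G_bound: "\<forall>t\<in>{1..T}. dual_norm nrm (g t) \<le> G"
    and S_R: "\<forall>i. \<forall>t\<in>{1..T}. S (agent t) t \<subseteq> recv_before T sig i t"
    and eta_def: "\<forall>t\<in>{1..T}. \<eta> t = r / sqrt
        ((\<Sum>s\<in>S (agent t) t. (dual_norm nrm (g s))\<^sup>2
            + 2 * dual_norm nrm (g s) *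
              (\<Sum>q\<in>recv_before T sig (agent t) s - S (agent s) s. dual_norm nrm (g q)))
         + G\<^sup>2 * (2 * real \<tau> + 1)\<^sup>2)"
    and p_X: "p \<in> X"
    and p_h: "h p \<le> ereal (r\<^sup>2)"
  shows "(\<Sum>t=1..T. real_of_ereal (f t (x t))) - (\<Sum>t=1..T. real_of_ereal (f t p))
           \<le> 2 * r * (MAX t\<in>{1..T}. sqrt
              ((\<Sum>s\<in>S (agent t) t. (dual_norm nrm (g s))\<^sup>2
                  + 2 * dual_norm nrm (g s) *
                    (\<Sum>q\<in>recv_before T sig (agent t) s - S (agent s) s. dual_norm nrm (g q)))
               + G\<^sup>2 * (2 * real \<tau> + 1)\<^sup>2))
       \<and> 2 * r * (MAX t\<in>{1..T}. sqrt
              ((\<Sum>s\<in>S (agent t) t. (dual_norm nrm (g s))\<^sup>2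
                  + 2 * dual_norm nrm (g s) *
                    (\<Sum>q\<in>recv_before T sig (agent t) s - S (agent s) s. dual_norm nrm (g q)))
               + G\<^sup>2 * (2 * real \<tau> + 1)\<^sup>2))
         \<le> 2 * r * sqrt
              ((\<Sum>s=1..T. (dual_norm nrm (g s))\<^sup>2
                  + 2 * dual_norm nrm (g s) *
                    (\<Sum>q\<in>{1..<s} - S (agent s) s. dual_norm nrm (g q)))
               + G\<^sup>2 * (2 * real \<tau> + 1)\<^sup>2)"
proof -
  interpret finite_dim_norm nrm
    by (rule finite_dim_norm.intro[OF norm])
  interpret arrival_orders T agent S sig
    by unfold_locales (use S_sub sig_perm sig_cons S_R in auto)
  interpret feedback: bounded_delay_feedback T \<tau> "\<lambda>t. S (agent t) t" "\<lambda>t. dual_norm nrm (g t)" G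
    by unfold_locales (use S_sub delay info_nested dual_norm_nonneg G_bound in auto)
  have lag_hat: "sqrt ((\<Sum>s\<in>S (agent t) t. (dual_norm nrm (g s))\<^sup>2 + 2 * dual_norm nrm (g s) *
        (\<Sum>q\<in>recv_before T sig (agent t) s - S (agent s) s. dual_norm nrm (g q)))
      + G\<^sup>2 * (2 * real \<tau> + 1)\<^sup>2) = feedback.lag_bound t" if "t \<in> {1..T}" for t
    unfolding feedback.lag_bound_def feedback.lag_def feedback.concurrent_def lag_hat_eq[OF that] ..
  interpret strongly_convex_regularizer nrm X h
    by unfold_locales (use X_closed X_convex p_X h_lsc h_sc X_dom_h h_nonneg in auto)
  interpret delayed_dda nrm X h T \<tau> "\<lambda>t. S (agent t) t" g G x r
    by unfold_locales (use r_pos dda_in dda_min eta_def lag_hat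
      in \<open>auto simp: dda_minimizer_def dda_objective_def inner_sum_left\<close>)
  have "(\<Sum>t=1..T. real_of_ereal (f t (x t))) - (\<Sum>t=1..T. real_of_ereal (f t p)) \<le> (\<Sum>t=1..T. g t \<bullet> (x t - p))"
    unfolding sum_subtractf[symmetric] using g_sub X_dom_f p_X by (intro sum_mono subdiff_real_le) auto
  also have "\<dots> \<le> 2 * r * (MAX t\<in>{1..T}. feedback.lag_bound t)"
    using T_pos p_X p_h by (rule linear_regret_le)
  moreover have "(MAX t\<in>{1..T}. sqrt ((\<Sum>s\<in>S (agent t) t. (dual_norm nrm (g s))\<^sup>2 + 2 * dual_norm nrm (g s) *
        (\<Sum>q\<in>recv_before T sig (agent t) s - S (agent s) s. dual_norm nrm (g q)))
      + G\<^sup>2 * (2 * real \<tau> + 1)\<^sup>2)) = (MAX t\<in>{1..T}. feedback.lag_bound t)"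
    using lag_hat by (intro arg_cong[where f = Max] image_cong) auto
  ultimately show ?thesis
    using feedback.Max_lag_bound_le[OF T_pos] r_pos unfolding feedback.lag_all_eq
    by (simp add: mult_left_mono)
qed

end
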